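(* For positive integers $r,m$ let \[J_{r,m}=\{(j_1,\dots,j_r)\in\mathbb{Z}^r:\ 1\le j_1<\dots<j_r\le m,\ j_k\le j_{k+1}-2\ \text{for all } k=1,\dots,r-1\}.\] Then \[\sum_{(j_1,\dots,j_r)\in J_{r,m}}\ \prod_{k=1}^{r}j_{r-k+1}=\frac{(m+1)_{2r}}{2^r\,r!},\] where $(x)_t=x(x-1)\cdots(x-t+1)$ is the falling factorial. *)

theory Defs
  imports Complex_Main
begin

definition falling_fact :: "int \<Rightarrow> nat \<Rightarrow> int" where
  "falling_fact x t = (\<Prod>i<t. x - int i)"

text \<open>J_{r,m}: tuples (j_1,...,j_r) (as lists, index k-1 for j_k) with
  1 \<le> j_1, j_r \<le> m, and j_k \<le> j_{k+1} - 2 (which implies strict increase).\<close>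
definition J_set :: "nat \<Rightarrow> nat \<Rightarrow> int list set" where
  "J_set r m = {js. length js = r \<and> (\<forall>k<r. 1 \<le> js ! k \<and> js ! k \<le> int m)
      \<and> (\<forall>k. k + 1 < r \<longrightarrow> js ! k < js ! (k+1) \<and> js ! k \<le> js ! (k+1) - 2)}"

end

theory Submission
  imports Defs
begin

text \<open>Split the tuples in \<open>J_{r+1,m+1}\<close> according to whether the last entry equals \<open>m + 1\<close>.
  Those that do are \<open>ys @ [m + 1]\<close> with \<open>ys \<in> J_{r,m-1}\<close>, so the weighted sums
  \<open>S(r,m) = J_sum r m\<close> satisfy \<open>S(r+1,m+1) = S(r+1,m) + (m+1) S(r,m-1)\<close>. The right-hand side
  \<open>F(r,m) = (m+1)_{2r} / (2^r r!)\<close> obeys the same recurrence, because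
  \<open>(x+1)_{n+1} - (x)_{n+1} = (n+1) (x)_n\<close>, and the boundary values agree.\<close>

lemma J_set_sorted_wrt:
  "J_set r m = {js. length js = r \<and> set js \<subseteq> {1..int m} \<and> sorted_wrt (\<lambda>a b. a + 2 \<le> b) js}"
proof -
  have "transp (\<lambda>a b :: int. a + 2 \<le> b)"
    by (rule transpI) simp
  then show ?thesis
    unfolding J_set_def
    by (auto simp: sorted_wrt_iff_nth_Suc_transp in_set_conv_nth subset_iff)
qed

lemma finite_J_set: "finite (J_set r m)"
proof (rule finite_subset)
  show "J_set r m \<subseteq> {js. set js \<subseteq> {1..int m} \<and> length js = r}"
    by (auto simp: J_set_sorted_wrt)
qed (simp add: finite_lists_length_eq)

lemma J_set_0: "J_set 0 m = {[]}"
  by (auto simp: J_set_def)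

lemma J_set_Suc_0: "J_set (Suc r) 0 = {}"
  by (fastforce simp: J_set_def)

lemma J_set_mono: "m \<le> n \<Longrightarrow> J_set r m \<subseteq> J_set r n"
  by (auto simp: J_set_def)

text \<open>For \<open>x < 3\<close> the truncated bound \<open>nat (x - 2) = 0\<close> still correctly forces \<open>ys = []\<close>.\<close>
lemma snoc_in_J_set_iff:
  "ys @ [x] \<in> J_set (Suc r) m \<longleftrightarrow> ys \<in> J_set r (nat (x - 2)) \<and> 1 \<le> x \<and> x \<le> int m"
proof -
  have "set ys \<subseteq> {1..int (nat (x - 2))} \<longleftrightarrow> set ys \<subseteq> {1..x - 2}"
    by (cases "ys = []") (auto simp: subset_iff)
  then show ?thesis
    unfolding J_set_sorted_wrt mem_Collect_eq by (auto simp: sorted_wrt_append subset_iff) force+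
qed

lemma J_set_Suc_Suc:
  "J_set (Suc r) (Suc m) = J_set (Suc r) m \<union> (\<lambda>ys. ys @ [int m + 1]) ` J_set r (m - 1)"
    (is "?L = ?R")
proof
  show "?L \<subseteq> ?R"
  proof
    fix js assume js: "js \<in> ?L"
    then have "js \<noteq> []"
      by (auto simp: J_set_def)
    then obtain ys x where js_eq: "js = ys @ [x]"
      by (metis rev_exhaust)
    with js have ys: "ys \<in> J_set r (nat (x - 2))" and x: "1 \<le> x" "x \<le> int m + 1"
      by (auto simp: snoc_in_J_set_iff)
    show "js \<in> ?R"
    proof (cases "x \<le> int m")
      case True
      with ys x show ?thesis
        by (simp add: js_eq snoc_in_J_set_iff)
    next
      case False
      with x have "x = int m + 1" and "nat (x - 2) = m - 1"
        by auto
      with ys show ?thesis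
        by (simp add: js_eq)
    qed
  qed
next
  have "nat (int m + 1 - 2) = m - 1"
    by simp
  then show "?R \<subseteq> ?L"
    using J_set_mono[of m "Suc m" "Suc r"] by (auto simp: snoc_in_J_set_iff)
qed

lemma J_set_Suc_Suc_disjoint:
  "J_set (Suc r) m \<inter> (\<lambda>ys. ys @ [int m + 1]) ` J_set r (m - 1) = {}"
  by (auto simp: snoc_in_J_set_iff)

definition J_sum :: "nat \<Rightarrow> nat \<Rightarrow> int" where
  "J_sum r m = (\<Sum>js\<in>J_set r m. prod_list js)"

lemma J_sum_0: "J_sum 0 m = 1"
  by (simp add: J_sum_def J_set_0)

lemma J_sum_Suc_0: "J_sum (Suc r) 0 = 0"
  by (simp add: J_sum_def J_set_Suc_0)

lemma J_sum_Suc_Suc: "J_sum (Suc r) (Suc m) = J_sum (Suc r) m + (int m + 1) * J_sum r (m - 1)"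
proof -
  have "J_sum (Suc r) (Suc m)
      = J_sum (Suc r) m + (\<Sum>js\<in>(\<lambda>ys. ys @ [int m + 1]) ` J_set r (m - 1). prod_list js)"
    unfolding J_sum_def J_set_Suc_Suc
    by (rule sum.union_disjoint) (use finite_J_set J_set_Suc_Suc_disjoint in auto)
  also have "(\<Sum>js\<in>(\<lambda>ys. ys @ [int m + 1]) ` J_set r (m - 1). prod_list js)
      = (\<Sum>ys\<in>J_set r (m - 1). prod_list ys * (int m + 1))"
    by (subst sum.reindex) (auto simp: inj_on_def)
  finally show ?thesis
    by (simp add: J_sum_def sum_distrib_right[symmetric] mult.commute)
qed

lemma falling_fact_0 [simp]: "falling_fact x 0 = 1"
  by (simp add: falling_fact_def)

lemma falling_fact_Suc_left: "falling_fact x (Suc n) = x * falling_fact (x - 1) n"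
  unfolding falling_fact_def by (subst prod.lessThan_Suc_shift) (simp add: algebra_simps)

lemma falling_fact_Suc_right: "falling_fact x (Suc n) = falling_fact x n * (x - int n)"
  by (simp add: falling_fact_def)

lemma falling_fact_plus_1_Suc:
  "falling_fact (x + 1) (Suc n) = falling_fact x (Suc n) + int (Suc n) * falling_fact x n"
  by (simp only: falling_fact_Suc_left[of "x + 1"] falling_fact_Suc_right[of x]) (simp add: algebra_simps)

lemma falling_fact_eq_0: "0 \<le> x \<Longrightarrow> x < int n \<Longrightarrow> falling_fact x n = 0"
  unfolding falling_fact_def by (rule prod_zero) (auto intro!: bexI[of _ "nat x"])

lemma falling_fact_1_even: "falling_fact 1 (2 * r) = falling_fact 0 (2 * r)"
  by (cases r) (simp_all add: falling_fact_eq_0)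

lemma J_sum_closed_form: "2 ^ r * fact r * J_sum r m = falling_fact (int m + 1) (2 * r)"
proof (induction m arbitrary: r rule: less_induct)
  case (less m)
  consider "r = 0" | r' where "r = Suc r'" "m = 0" | r' m' where "r = Suc r'" "m = Suc m'"
    by (metis not0_implies_Suc)
  then show ?case
  proof cases
    case 1
    then show ?thesis by (simp add: J_sum_0)
  next
    case 2
    then show ?thesis by (simp add: J_sum_Suc_0 falling_fact_eq_0)
  next
    case 3
    \<comment> \<open>For \<open>m' = 0\<close> the truncation \<open>m' - 1 = 0\<close> gives \<open>(1)_{2r'}\<close> instead of \<open>(0)_{2r'}\<close>; they agree.\<close>
    have shift: "falling_fact (int (m' - 1) + 1) (2 * r') = falling_fact (int m') (2 * r')"
      by (cases m') (simp_all add: falling_fact_1_even add.commute)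
    have "2 ^ r * fact r * J_sum r m
        = 2 ^ r * fact r * J_sum r m'
          + 2 * int r * (int m' + 1) * (2 ^ r' * fact r' * J_sum r' (m' - 1))"
      using 3 by (simp add: J_sum_Suc_Suc algebra_simps)
    also have "\<dots> = falling_fact (int m' + 1) (2 * r)
          + 2 * int r * (int m' + 1) * falling_fact (int m') (2 * r')"
      using less.IH[of m' r] less.IH[of "m' - 1" r'] 3 shift by simp
    also have "\<dots> = falling_fact (int m' + 1) (Suc (Suc (2 * r')))
          + int (Suc (Suc (2 * r'))) * falling_fact (int m' + 1) (Suc (2 * r'))"
      using 3 by (simp add: falling_fact_Suc_left algebra_simps)
    also have "\<dots> = falling_fact (int m' + 1 + 1) (Suc (Suc (2 * r')))"
      by (rule falling_fact_plus_1_Suc[symmetric])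
    also have "\<dots> = falling_fact (int m + 1) (2 * r)"
      using 3 by simp
    finally show ?thesis .
  qed
qed

lemma prod_reflect_atLeastAtMost_1: "(\<Prod>k\<in>{1..n}. g (n - k)) = (\<Prod>i<n. g i)" for n :: nat
  by (rule prod.reindex_bij_witness[where i="\<lambda>i. n - i" and j="\<lambda>k. n - k"]) auto

lemma prod_rev_nth_eq_prod_list:
  "length js = r \<Longrightarrow> (\<Prod>k\<in>{1..r}. real_of_int (js ! (r - k))) = real_of_int (prod_list js)"
  using prod_reflect_atLeastAtMost_1[of "\<lambda>i. real_of_int (js ! i)" r]
  by (simp add: prod.list_conv_set_nth atLeast0LessThan)

theorem lemma3p4:
  fixes r m :: nat
  assumes "r > 0" and "m > 0"
  shows "(\<Sum>js\<in>J_set r m. \<Prod>k\<in>{1..r}. (real_of_int (js ! (r - k))))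
         = real_of_int (falling_fact (int m + 1) (2*r)) / (2 ^ r * fact r)"
proof -
  have "(\<Sum>js\<in>J_set r m. \<Prod>k\<in>{1..r}. (real_of_int (js ! (r - k)))) = real_of_int (J_sum r m)"
    unfolding J_sum_def of_int_sum
    by (rule sum.cong[OF refl], rule prod_rev_nth_eq_prod_list) (simp add: J_set_def)
  also have "\<dots> = real_of_int (falling_fact (int m + 1) (2 * r)) / (2 ^ r * fact r)"
    unfolding J_sum_closed_form[symmetric] by (simp add: field_simps)
  finally show ?thesis .
qed

end
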